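(* Let $\mathcal{R}$ be a left-linear TRS. If there is a confluent TRS $\mathcal{C}\subseteq\mathcal{R}$ such that $t\leftrightarrow^*_\mathcal{C} u$ for every parallel critical pair $(t,u)$ between $\mathcal{R}$ and $\mathcal{R}$, then $\mathcal{R}$ is confluent.
   Context: A TRS is a set of rules $\ell\to r$ with $\ell\notin\mathcal{V}$, $\mathcal{V}ar(r)\subseteq\mathcal{V}ar(\ell)$; left-linear: no variable occurs twice in a left-hand side; confluent: ${}_\mathcal{R}\!\!\leftarrow^*\cdot\to_\mathcal{R}^*\subseteq\to_\mathcal{R}^*\cdot{}_\mathcal{R}\!\!\leftarrow^*$; $\leftrightarrow^*_\mathcal{C}$ is the reflexive-transitive-symmetric closure of $\to_\mathcal{C}$. Positions $p,q$ are parallel if neither is a prefix of the other; $\mathcal{P}os_\mathcal{F}(\ell)$ denotes the function-symbol positions of $\ell$; $\epsilon$ is the root. Parallel critical pair between $\mathcal{R}$ and $\mathcal{S}$: let $\ell\to r$ be a variant (renaming) of an $\mathcal{S}$-rule, $P\subseteq\mathcal{P}os_\mathcal{F}(\ell)$ a non-empty set of pairwise parallel positions, $\ell_p\to r_p$ ($p\in P$) variants of $\mathcal{R}$-rules, all these rules pairwise variable-disjoint, $\sigma$ a most general unifier of $\{\ell_p\approx\ell|_p\}_{p\in P}$, and if $P=\{\epsilon\}$ then $\ell_\epsilon\to r_\epsilon$ is not a variant of $\ell\to r$. Then $((\ell\sigma)[r_p\sigma]_{p\in P}, r\sigma)$ is a parallel critical pair. *)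

theory Defs
  imports Main
begin

datatype ('f, 'v) "term" = Var 'v | Fun 'f "('f, 'v) term list"

type_synonym ('f, 'v) rule = "('f, 'v) term \<times> ('f, 'v) term"
type_synonym ('f, 'v) trs = "('f, 'v) rule set"
type_synonym ('f, 'v) subst = "'v \<Rightarrow> ('f, 'v) term"
type_synonym pos = "nat list"

fun vars :: "('f, 'v) term \<Rightarrow> 'v set" where
  "vars (Var x) = {x}"
| "vars (Fun f ts) = (\<Union>t \<in> set ts. vars t)"

fun subst :: "('f, 'v) term \<Rightarrow> ('f, 'v) subst \<Rightarrow> ('f, 'v) term" where
  "subst (Var x) \<sigma> = \<sigma> x"
| "subst (Fun f ts) \<sigma> = Fun f (map (\<lambda>t. subst t \<sigma>) ts)"

fun subt_at :: "('f, 'v) term \<Rightarrow> pos \<Rightarrow> ('f, 'v) term" where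
  "subt_at t [] = t"
| "subt_at (Fun f ts) (i # p) = subt_at (ts ! i) p"
| "subt_at (Var x) (i # p) = Var x"

fun valid_pos :: "('f, 'v) term \<Rightarrow> pos \<Rightarrow> bool" where
  "valid_pos t [] = True"
| "valid_pos (Fun f ts) (i # p) = (i < length ts \<and> valid_pos (ts ! i) p)"
| "valid_pos (Var x) (i # p) = False"

definition poss :: "('f, 'v) term \<Rightarrow> pos set" where
  "poss t = {p. valid_pos t p}"

definition fun_poss :: "('f, 'v) term \<Rightarrow> pos set" where
  "fun_poss t = {p. p \<in> poss t \<and> (\<forall>x. subt_at t p \<noteq> Var x)}"

fun replace_at :: "('f, 'v) term \<Rightarrow> pos \<Rightarrow> ('f, 'v) term \<Rightarrow> ('f, 'v) term" where
  "replace_at t [] u = u"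
| "replace_at (Fun f ts) (i # p) u = Fun f (ts[i := replace_at (ts ! i) p u])"
| "replace_at (Var x) (i # p) u = Var x"

text \<open>Simultaneous replacement at a set of (pairwise parallel) positions:
  par_repl t P g is t with the subterm at each p in P replaced by g p.\<close>

function par_repl :: "('f, 'v) term \<Rightarrow> pos set \<Rightarrow> (pos \<Rightarrow> ('f, 'v) term) \<Rightarrow> ('f, 'v) term" where
  "par_repl t P g =
     (if [] \<in> P then g []
      else (case t of
              Var x \<Rightarrow> Var x
            | Fun f ts \<Rightarrow> Fun f (map (\<lambda>(i, s). par_repl s {q. i # q \<in> P} (\<lambda>q. g (i # q)))
                                     (zip [0..<length ts] ts))))"
  by pat_completeness auto
termination
  by (relation "measure (\<lambda>(t, P, g). size t)")
     (auto dest!: set_zip_rightD simp: less_Suc_eq_le intro!: size_list_estimation')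

definition parallel :: "pos \<Rightarrow> pos \<Rightarrow> bool" where
  "parallel p q \<longleftrightarrow> \<not> (\<exists>w. q = p @ w) \<and> \<not> (\<exists>w. p = q @ w)"

definition rstep :: "('f, 'v) trs \<Rightarrow> ('f, 'v) term rel" where
  "rstep R = {(s, t). \<exists>l r p \<sigma>. (l, r) \<in> R \<and> p \<in> poss s \<and>
                 subt_at s p = subst l \<sigma> \<and> t = replace_at s p (subst r \<sigma>)}"

definition wf_trs :: "('f, 'v) trs \<Rightarrow> bool" where
  "wf_trs R \<longleftrightarrow> (\<forall>(l, r) \<in> R. (\<forall>x. l \<noteq> Var x) \<and> vars r \<subseteq> vars l)"

fun linear_term :: "('f, 'v) term \<Rightarrow> bool" where
  "linear_term (Var x) = True"
| "linear_term (Fun f ts) =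
     ((\<forall>t \<in> set ts. linear_term t) \<and>
      (\<forall>i j. i < j \<and> j < length ts \<longrightarrow> vars (ts ! i) \<inter> vars (ts ! j) = {}))"

definition left_linear :: "('f, 'v) trs \<Rightarrow> bool" where
  "left_linear R \<longleftrightarrow> (\<forall>(l, r) \<in> R. linear_term l)"

definition CR :: "('f, 'v) trs \<Rightarrow> bool" where
  "CR R \<longleftrightarrow> ((rstep R)\<inverse>)\<^sup>* O (rstep R)\<^sup>* \<subseteq> (rstep R)\<^sup>* O ((rstep R)\<inverse>)\<^sup>*"

definition conv :: "('f, 'v) trs \<Rightarrow> ('f, 'v) term rel" where
  "conv C = (rstep C \<union> (rstep C)\<inverse>)\<^sup>*"

definition is_variant :: "('f, 'v) rule \<Rightarrow> ('f, 'v) rule \<Rightarrow> bool" where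
  "is_variant rl' rl \<longleftrightarrow> (\<exists>\<rho>. bij \<rho> \<and> fst rl' = subst (fst rl) (Var \<circ> \<rho>)
                                     \<and> snd rl' = subst (snd rl) (Var \<circ> \<rho>))"

definition variant_of :: "('f, 'v) rule \<Rightarrow> ('f, 'v) trs \<Rightarrow> bool" where
  "variant_of rl R \<longleftrightarrow> (\<exists>rl0 \<in> R. is_variant rl rl0)"

definition rule_vars :: "('f, 'v) rule \<Rightarrow> 'v set" where
  "rule_vars rl = vars (fst rl) \<union> vars (snd rl)"

definition unifier :: "('f, 'v) subst \<Rightarrow> (('f, 'v) term \<times> ('f, 'v) term) set \<Rightarrow> bool" where
  "unifier \<sigma> E \<longleftrightarrow> (\<forall>(s, t) \<in> E. subst s \<sigma> = subst t \<sigma>)"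

definition is_mgu :: "('f, 'v) subst \<Rightarrow> (('f, 'v) term \<times> ('f, 'v) term) set \<Rightarrow> bool" where
  "is_mgu \<sigma> E \<longleftrightarrow> unifier \<sigma> E \<and>
     (\<forall>\<tau>. unifier \<tau> E \<longrightarrow> (\<exists>\<delta>. \<forall>x. \<tau> x = subst (\<sigma> x) \<delta>))"

definition pcp :: "('f, 'v) trs \<Rightarrow> ('f, 'v) trs \<Rightarrow> ('f, 'v) term rel" where
  "pcp R S = {(t, u). \<exists>l r P rls \<sigma>.
      variant_of (l, r) S \<and>
      P \<noteq> {} \<and> P \<subseteq> fun_poss l \<and>
      (\<forall>p \<in> P. \<forall>q \<in> P. p \<noteq> q \<longrightarrow> parallel p q) \<and>
      (\<forall>p \<in> P. variant_of (rls p) R) \<and>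
      (\<forall>p \<in> P. rule_vars (rls p) \<inter> rule_vars (l, r) = {}) \<and>
      (\<forall>p \<in> P. \<forall>q \<in> P. p \<noteq> q \<longrightarrow> rule_vars (rls p) \<inter> rule_vars (rls q) = {}) \<and>
      is_mgu \<sigma> {(fst (rls p), subt_at l p) | p. p \<in> P} \<and>
      (P = {[]} \<longrightarrow> \<not> is_variant (rls []) (l, r)) \<and>
      t = par_repl (subst l \<sigma>) P (\<lambda>p. subst (snd (rls p)) \<sigma>) \<and>
      u = subst r \<sigma>}"

end

theory Submission
  imports Defs "HOL-Library.Confluence"
begin

text \<open>
  Peaks of parallel steps \<open>t \<leftarrow>\<^bsub>S1\<^esub> s \<rightarrow>\<^bsub>S2\<^esub> u\<close> with \<open>S1, S2 \<subseteq> R\<close> close as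
  \<open>t \<rightarrow>\<^bsub>S2\<^esub> v \<leftrightarrow>\<^sup>*\<^bsub>C\<^esub> w \<leftarrow>\<^bsub>S1\<^esub> u\<close> (all arrows parallel). By induction on \<open>s \<rightarrow> t\<close> the only
  real case is a root step \<open>l\<sigma> \<rightarrow> r\<sigma>\<close> against a parallel step from \<open>l\<sigma>\<close>. Left-linearity
  splits the latter into redexes at function positions of \<open>l\<close> and a parallel step
  \<open>\<sigma> \<rightarrow> \<sigma>'\<close> of the substitution; renaming the inner rules apart and taking an mgu
  exhibits the pattern part as an instance of a parallel critical pair, which is
  C-convertible. Taking \<open>S1 = C\<close> shows that \<open>\<rightarrow>\<^sup>*\<^bsub>C\<^esub>\<close> commutes with parallel R-steps up to
  \<open>\<leftrightarrow>\<^sup>*\<^bsub>C\<^esub>\<close>, which by confluence of C is C-joinability; hence parallel R-steps followed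
  by \<open>\<rightarrow>\<^sup>*\<^bsub>C\<^esub>\<close> have the diamond property, and their reflexive transitive closure is \<open>\<rightarrow>\<^sup>*\<^bsub>R\<^esub>\<close>.
\<close>

section \<open>Terms, substitutions and positions\<close>

lemma subst_subst: "subst (subst t \<sigma>) \<tau> = subst t (\<lambda>x. subst (\<sigma> x) \<tau>)"
  by (induction t) auto

lemma subst_cong: "(\<And>x. x \<in> vars t \<Longrightarrow> \<sigma> x = \<tau> x) \<Longrightarrow> subst t \<sigma> = subst t \<tau>"
  by (induction t) auto

lemma subst_eq_imp_eq_on_vars: "subst t \<sigma> = subst t \<tau> \<Longrightarrow> x \<in> vars t \<Longrightarrow> \<sigma> x = \<tau> x"
  by (induction t) auto

lemma subst_Var [simp]: "subst t Var = t"
  by (induction t) (auto simp: map_idI)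

lemma finite_vars [simp]: "finite (vars t)"
  by (induction t) auto

lemma vars_subst: "vars (subst t \<sigma>) = (\<Union>x\<in>vars t. vars (\<sigma> x))"
  by (induction t) auto

lemma vars_rename: "vars (subst t (Var \<circ> \<rho>)) = \<rho> ` vars t"
  by (induction t) auto

lemma size_subst_lt_if_occurs:
  "x \<in> vars u \<Longrightarrow> u \<noteq> Var x \<Longrightarrow> size (\<tau> x) < size (subst u \<tau>)"
proof (induction u)
  case (Fun f us)
  then obtain u where u: "u \<in> set us" "x \<in> vars u" by auto
  have "size (\<tau> x) \<le> size (subst u \<tau>)"
    using Fun.IH[OF u] by (cases "u = Var x") auto
  also have "\<dots> \<le> size_list size (map (\<lambda>t. subst t \<tau>) us)"
    by (rule size_list_estimation') (use u in auto)
  finally show ?case by simp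
qed simp

lemma exists_fun_agreeing_on_disjoint:
  assumes "\<forall>i\<in>I. \<forall>j\<in>I. i \<noteq> j \<longrightarrow> A i \<inter> A j = {}"
  shows "\<exists>g. \<forall>i\<in>I. \<forall>x\<in>A i. g x = f i x"
proof -
  have "(SOME i. i \<in> I \<and> x \<in> A i) = i" if "i \<in> I" "x \<in> A i" for i x
    by (rule some_equality) (use assms that in auto)
  then show ?thesis
    by (intro exI[of _ "\<lambda>x. f (SOME i. i \<in> I \<and> x \<in> A i) x"]) auto
qed

lemma valid_pos_subst: "valid_pos t p \<Longrightarrow> valid_pos (subst t \<sigma>) p"
  by (induction t p rule: valid_pos.induct) auto

lemma vars_subt_at: "valid_pos t p \<Longrightarrow> vars (subt_at t p) \<subseteq> vars t"
  by (induction t p rule: valid_pos.induct) force+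

lemma poss_Var: "poss (Var x) = {[]}"
  by (auto simp: poss_def elim: valid_pos.elims)

lemma poss_Fun: "poss (Fun f ts) = insert [] (\<Union>i<length ts. (#) i ` poss (ts ! i))"
proof (rule set_eqI)
  show "p \<in> poss (Fun f ts) \<longleftrightarrow> p \<in> insert [] (\<Union>i<length ts. (#) i ` poss (ts ! i))" for p
    by (cases p) (auto simp: poss_def)
qed

lemma finite_poss: "finite (poss t)"
  by (induction t) (simp_all add: poss_Var poss_Fun)

lemma fun_poss_Cons: "i # q \<in> fun_poss (Fun f ls) \<longleftrightarrow> i < length ls \<and> q \<in> fun_poss (ls ! i)"
  by (auto simp: fun_poss_def poss_def)

lemma root_in_fun_poss: "[] \<in> fun_poss (Fun f ls)"
  by (auto simp: fun_poss_def poss_def)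

lemma parallel_Cons: "parallel (i # p) (j # q) \<longleftrightarrow> i \<noteq> j \<or> parallel p q"
  unfolding parallel_def by auto

section \<open>Rewriting and conversion\<close>

lemma rstep_rootI:
  assumes "(l, r) \<in> R"
  shows "(subst l \<sigma>, subst r \<sigma>) \<in> rstep R"
proof -
  have "[] \<in> poss (subst l \<sigma>)" by (simp add: poss_def)
  then show ?thesis unfolding rstep_def using assms by fastforce
qed

lemma rstep_ctxtI:
  assumes "(s, t) \<in> rstep R"
  shows "(Fun f (ss1 @ s # ss2), Fun f (ss1 @ t # ss2)) \<in> rstep R"
proof -
  obtain l r p \<sigma> where step: "(l, r) \<in> R" "valid_pos s p" "subt_at s p = subst l \<sigma>"
    "t = replace_at s p (subst r \<sigma>)"
    using assms unfolding rstep_def poss_def by auto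
  let ?p = "length ss1 # p"
  have "valid_pos (Fun f (ss1 @ s # ss2)) ?p" "subt_at (Fun f (ss1 @ s # ss2)) ?p = subst l \<sigma>"
    "Fun f (ss1 @ t # ss2) = replace_at (Fun f (ss1 @ s # ss2)) ?p (subst r \<sigma>)"
    using step by (auto simp: nth_append)
  then show ?thesis
    using step(1) unfolding rstep_def poss_def by blast
qed

lemma rstep_induct [consumes 1, case_names root ctxt]:
  assumes "(s, t) \<in> rstep R"
    and root: "\<And>l r \<sigma>. (l, r) \<in> R \<Longrightarrow> P (subst l \<sigma>) (subst r \<sigma>)"
    and ctxt: "\<And>s t f ss1 ss2. (s, t) \<in> rstep R \<Longrightarrow> P s t \<Longrightarrow>
      P (Fun f (ss1 @ s # ss2)) (Fun f (ss1 @ t # ss2))"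
  shows "P s t"
proof -
  obtain l r p \<sigma> where "(l, r) \<in> R" "valid_pos s p" "subt_at s p = subst l \<sigma>"
    and t: "t = replace_at s p (subst r \<sigma>)"
    using assms(1) unfolding rstep_def poss_def by auto
  then show ?thesis
  proof (induction p arbitrary: s t)
    case Nil
    then show ?case using root by simp
  next
    case (Cons i p)
    then obtain f ss where s: "s = Fun f ss" and i: "i < length ss" by (cases s) auto
    let ?t = "replace_at (ss ! i) p (subst r \<sigma>)"
    have "(ss ! i, ?t) \<in> rstep R"
      using Cons.prems s unfolding rstep_def poss_def by auto
    moreover have "P (ss ! i) ?t"
      using Cons s by auto
    ultimately have
      "P (Fun f (take i ss @ ss ! i # drop (Suc i) ss)) (Fun f (take i ss @ ?t # drop (Suc i) ss))"
      by (rule ctxt)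
    then show ?case
      using Cons.prems s i by (simp add: id_take_nth_drop[symmetric] upd_conv_take_nth_drop)
  qed
qed

lemma rstep_subst: "(s, t) \<in> rstep R \<Longrightarrow> (subst s \<delta>, subst t \<delta>) \<in> rstep R"
proof (induction rule: rstep_induct)
  case (root l r \<sigma>)
  then show ?case using rstep_rootI[OF root, of "\<lambda>x. subst (\<sigma> x) \<delta>"] by (simp add: subst_subst)
qed (auto intro: rstep_ctxtI)

lemma rstep_mono: "R \<subseteq> S \<Longrightarrow> rstep R \<subseteq> rstep S"
  unfolding rstep_def by blast

definition ctxt_closed :: "('f, 'v) term rel \<Rightarrow> bool" where
  "ctxt_closed Q \<longleftrightarrow>
    (\<forall>s t f ss1 ss2. (s, t) \<in> Q \<longrightarrow> (Fun f (ss1 @ s # ss2), Fun f (ss1 @ t # ss2)) \<in> Q)"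

lemma ctxt_closed_rstep: "ctxt_closed (rstep R)"
  unfolding ctxt_closed_def by (auto intro: rstep_ctxtI)

lemma ctxt_closed_symcl: "ctxt_closed Q \<Longrightarrow> ctxt_closed (Q \<union> Q\<inverse>)"
  unfolding ctxt_closed_def by blast

lemma ctxt_closed_rtrancl_args:
  assumes "ctxt_closed Q" and "list_all2 (\<lambda>s t. (s, t) \<in> Q\<^sup>*) ss ts"
  shows "(Fun f ss, Fun f ts) \<in> Q\<^sup>*"
proof -
  have "(Fun f (pre @ ss), Fun f (pre @ ts)) \<in> Q\<^sup>*" for pre
    using assms(2)
  proof (induction arbitrary: pre rule: list_all2_induct)
    case (Cons s ss t ts)
    have "(Fun f (pre @ s # ss), Fun f (pre @ t # ss)) \<in> Q\<^sup>*"
      using Cons(1)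
    proof (induction rule: rtrancl_induct)
      case (step u v)
      then show ?case
        using assms(1) unfolding ctxt_closed_def by (meson rtrancl.rtrancl_into_rtrancl)
    qed simp
    moreover have "(Fun f ((pre @ [t]) @ ss), Fun f ((pre @ [t]) @ ts)) \<in> Q\<^sup>*"
      by (rule Cons(3))
    ultimately show ?case by simp
  qed simp
  from this[of "[]"] show ?thesis by simp
qed

lemma conv_refl [simp]: "(s, s) \<in> conv C"
  unfolding conv_def by simp

lemma conv_sym: "(s, t) \<in> conv C \<Longrightarrow> (t, s) \<in> conv C"
  unfolding conv_def
  by (metis converse_Un converse_converse rtrancl_converseI sup_commute)

lemma conv_trans: "(s, t) \<in> conv C \<Longrightarrow> (t, u) \<in> conv C \<Longrightarrow> (s, u) \<in> conv C"
  unfolding conv_def by simp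

lemma rsteps_imp_conv: "(s, t) \<in> (rstep C)\<^sup>* \<Longrightarrow> (s, t) \<in> conv C"
  unfolding conv_def by (meson in_rtrancl_UnI)

lemma conv_subst: "(s, t) \<in> conv C \<Longrightarrow> (subst s \<delta>, subst t \<delta>) \<in> conv C"
  unfolding conv_def
proof (induction rule: rtrancl_induct)
  case (step u v)
  then show ?case
    by (metis (no_types, lifting) Un_iff converseI converseD rtrancl.rtrancl_into_rtrancl
        rstep_subst)
qed simp

lemma conv_args:
  "length ss = length ts \<Longrightarrow> \<forall>i<length ss. (ss ! i, ts ! i) \<in> conv C \<Longrightarrow> (Fun f ss, Fun f ts) \<in> conv C"
  unfolding conv_def
  by (rule ctxt_closed_rtrancl_args[OF ctxt_closed_symcl[OF ctxt_closed_rstep]])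
     (simp add: list_all2_conv_all_nth)

lemma CR_conv_imp_join:
  assumes "CR C" and "(s, t) \<in> conv C"
  shows "\<exists>u. (s, u) \<in> (rstep C)\<^sup>* \<and> (t, u) \<in> (rstep C)\<^sup>*"
proof -
  let ?r = "\<lambda>s t. (s, t) \<in> rstep C"
  have "confluentp ?r"
    using assms(1) unfolding CR_def
    by (intro confluentpI) (auto simp: rtranclp_rtrancl_eq rtrancl_converse)
  have sym: "{(x, y). ?r x y \<or> ?r y x} = rstep C \<union> (rstep C)\<inverse>"
    and inv: "{(x, y). ?r y x} = (rstep C)\<inverse>" by auto
  have "equivclp ?r s t"
    using assms(2) unfolding conv_def equivclp_def rtranclp_rtrancl_eq symclp_def sym .
  with \<open>confluentp ?r\<close> show ?thesis
    by (auto simp: semiconfluentp_equivclp confluentp_imp_semiconfluentp rtranclp_rtrancl_eq inv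
      rtrancl_converse)
qed

lemma diamond_imp_confluent:
  assumes "D\<inverse> O D \<subseteq> D O D\<inverse>"
  shows "(D\<^sup>*)\<inverse> O D\<^sup>* \<subseteq> D\<^sup>* O (D\<^sup>*)\<inverse>"
proof -
  have "strong_confluentp (\<lambda>s t. (s, t) \<in> D)"
    by (rule strong_confluentpI) (use assms in blast)
  then have "confluentp (\<lambda>s t. (s, t) \<in> D)"
    by (rule strong_confluentp_imp_confluentp)
  from confluentpD[OF this] show ?thesis
    by (fastforce simp: rtranclp_rtrancl_eq)
qed

section \<open>Parallel rewriting\<close>

inductive_set par_rstep :: "('f, 'v) trs \<Rightarrow> ('f, 'v) term rel" for R where
  var: "(Var x, Var x) \<in> par_rstep R"
| args: "length ss = length ts \<Longrightarrow> \<forall>i<length ss. (ss ! i, ts ! i) \<in> par_rstep R \<Longrightarrow>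
    (Fun f ss, Fun f ts) \<in> par_rstep R"
| root: "(l, r) \<in> R \<Longrightarrow> (subst l \<sigma>, subst r \<sigma>) \<in> par_rstep R"

lemma par_rstep_refl [simp]: "(t, t) \<in> par_rstep R"
  by (induction t) (auto intro!: par_rstep.intros)

lemma rstep_imp_par_rstep: "(s, t) \<in> rstep R \<Longrightarrow> (s, t) \<in> par_rstep R"
proof (induction rule: rstep_induct)
  case (ctxt s t f ss1 ss2)
  show ?case
    by (rule par_rstep.args) (use ctxt in \<open>auto simp: nth_append nth_Cons split: nat.splits\<close>)
qed (rule par_rstep.root)

lemma par_rstep_imp_rsteps: "(s, t) \<in> par_rstep R \<Longrightarrow> (s, t) \<in> (rstep R)\<^sup>*"
proof (induction rule: par_rstep.induct)
  case (args ss ts f)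
  then show ?case
    by (intro ctxt_closed_rtrancl_args[OF ctxt_closed_rstep]) (auto simp: list_all2_conv_all_nth)
qed (auto intro: rstep_rootI)

lemma par_rstep_subst:
  "(\<And>x. x \<in> vars t \<Longrightarrow> (\<sigma> x, \<tau> x) \<in> par_rstep R) \<Longrightarrow> (subst t \<sigma>, subst t \<tau>) \<in> par_rstep R"
proof (induction t)
  case (Fun f ts)
  show ?case by (simp, rule par_rstep.args) (auto intro!: Fun.IH Fun.prems nth_mem)
qed simp

declare par_repl.simps [simp del]

lemma par_repl_root: "[] \<in> P \<Longrightarrow> par_repl t P g = g []"
  by (subst par_repl.simps) simp

lemma par_repl_Var: "[] \<notin> P \<Longrightarrow> par_repl (Var x) P g = Var x"
  by (subst par_repl.simps) simp

lemma par_repl_Fun: "[] \<notin> P \<Longrightarrow> par_repl (Fun f ts) P g =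
   Fun f (map (\<lambda>i. par_repl (ts ! i) {q. i # q \<in> P} (\<lambda>q. g (i # q))) [0..<length ts])"
proof -
  have "map (\<lambda>(i, s). h i s) (zip [0..<length ts] ts) = map (\<lambda>i. h i (ts ! i)) [0..<length ts]"
    for h :: "nat \<Rightarrow> _ \<Rightarrow> _"
    by (rule nth_equalityI) auto
  then show "[] \<notin> P \<Longrightarrow> ?thesis" by (subst par_repl.simps) simp
qed

lemma par_repl_empty [simp]: "par_repl t {} g = t"
proof (induction t arbitrary: g)
  case (Fun f ts)
  then show ?case by (simp add: par_repl_Fun) (rule nth_equalityI, auto)
qed (simp add: par_repl_Var)

lemma par_repl_cong: "(\<And>p. p \<in> P \<Longrightarrow> g p = g' p) \<Longrightarrow> par_repl t P g = par_repl t P g'"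
proof (induction t arbitrary: P g g')
  case (Var x)
  then show ?case by (cases "[] \<in> P") (auto simp: par_repl_Var par_repl_root)
next
  case (Fun f ts)
  show ?case
  proof (cases "[] \<in> P")
    case False
    have "par_repl (ts ! i) {q. i # q \<in> P} (\<lambda>q. g (i # q)) =
      par_repl (ts ! i) {q. i # q \<in> P} (\<lambda>q. g' (i # q))"
      if "i < length ts" for i
      by (rule Fun.IH) (use that Fun.prems in auto)
    with False show ?thesis by (simp add: par_repl_Fun)
  qed (use Fun in \<open>simp add: par_repl_root\<close>)
qed

lemma par_repl_subst:
  "P \<subseteq> poss t \<Longrightarrow> subst (par_repl t P g) \<delta> = par_repl (subst t \<delta>) P (\<lambda>p. subst (g p) \<delta>)"
proof (induction t arbitrary: P g)
  case (Var x)
  then have "P = {} \<or> [] \<in> P" by (auto simp: poss_Var)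
  then show ?case by (auto simp: par_repl_root)
next
  case (Fun f ts)
  have "{q. i # q \<in> P} \<subseteq> poss (ts ! i)" for i
    using Fun.prems by (auto simp: poss_def)
  with Fun.IH show ?case
    by (cases "[] \<in> P") (simp_all add: par_repl_root par_repl_Fun)
qed

lemma par_repl_Fun_children:
  "par_repl (Fun f ts) {i # q | i q. i < length ts \<and> q \<in> Q i} g =
    Fun f (map (\<lambda>i. par_repl (ts ! i) (Q i) (\<lambda>q. g (i # q))) [0..<length ts])"
proof -
  have "{q. i # q \<in> {i # q | i q. i < length ts \<and> q \<in> Q i}} = Q i" if "i < length ts" for i
    using that by auto
  then show ?thesis
    by (simp add: par_repl_Fun cong: map_cong)
qed

text \<open>
  A parallel step \<open>l\<sigma> \<rightarrow> u\<close> seen through the pattern \<open>l\<close>: the redexes at the function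
  positions \<open>P\<close> of \<open>l\<close> are contracted with rule \<open>rls p\<close> and matcher \<open>\<theta> p\<close>, all other
  steps take place inside the substitution, \<open>\<sigma> \<rightarrow> \<sigma>'\<close>.
\<close>

definition par_rstep_split ::
  "('f, 'v) trs \<Rightarrow> ('f, 'v) term \<Rightarrow> ('f, 'v) subst \<Rightarrow> ('f, 'v) term \<Rightarrow>
   pos set \<Rightarrow> (pos \<Rightarrow> ('f, 'v) rule) \<Rightarrow> (pos \<Rightarrow> ('f, 'v) subst) \<Rightarrow> ('f, 'v) subst \<Rightarrow> bool" where
  "par_rstep_split S l \<sigma> u P rls \<theta> \<sigma>' \<longleftrightarrow>
    P \<subseteq> fun_poss l \<and> (\<forall>p\<in>P. \<forall>q\<in>P. p \<noteq> q \<longrightarrow> parallel p q) \<and>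
    (\<forall>p\<in>P. rls p \<in> S \<and> subst (fst (rls p)) (\<theta> p) = subst (subt_at l p) \<sigma>') \<and>
    (\<forall>x\<in>vars l. (\<sigma> x, \<sigma>' x) \<in> par_rstep S) \<and>
    u = par_repl (subst l \<sigma>') P (\<lambda>p. subst (snd (rls p)) (\<theta> p))"

lemma par_rstep_split_Var:
  "(\<sigma> x, u) \<in> par_rstep S \<Longrightarrow> par_rstep_split S (Var x) \<sigma> u {} rls \<theta> (\<sigma>(x := u))"
  unfolding par_rstep_split_def by auto

lemma par_rstep_split_root:
  assumes "rl \<in> S" and "subst (fst rl) \<theta> = subst (Fun f ls) \<sigma>"
  shows "par_rstep_split S (Fun f ls) \<sigma> (subst (snd rl) \<theta>) {[]} (\<lambda>_. rl) (\<lambda>_. \<theta>) \<sigma>"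
  using assms unfolding par_rstep_split_def by (auto simp: root_in_fun_poss par_repl_root)

lemma par_rstep_split_Fun:
  assumes disj: "\<forall>i j. i < j \<and> j < length ls \<longrightarrow> vars (ls ! i) \<inter> vars (ls ! j) = {}"
    and len: "length us = length ls"
    and split: "\<forall>i<length ls. par_rstep_split S (ls ! i) \<sigma> (us ! i) (Pf i) (rf i) (\<theta>f i) (\<sigma>f i)"
  shows "\<exists>P rls \<theta> \<sigma>'. par_rstep_split S (Fun f ls) \<sigma> (Fun f us) P rls \<theta> \<sigma>'"
proof -
  let ?n = "length ls"
  have "\<forall>i\<in>{..<?n}. \<forall>j\<in>{..<?n}. i \<noteq> j \<longrightarrow> vars (ls ! i) \<inter> vars (ls ! j) = {}"
    using disj by (metis Int_commute lessThan_iff linorder_neqE_nat)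
  then obtain \<sigma>' where \<sigma>': "\<forall>i<?n. \<forall>x\<in>vars (ls ! i). \<sigma>' x = \<sigma>f i x"
    using exists_fun_agreeing_on_disjoint[of "{..<?n}" "\<lambda>i. vars (ls ! i)" \<sigma>f]
    by (metis lessThan_iff)
  have subst_arg: "subst t \<sigma>' = subst t (\<sigma>f i)" if "i < ?n" "vars t \<subseteq> vars (ls ! i)" for i t
    by (rule subst_cong) (use that \<sigma>' in auto)
  define P where "P = {i # q | i q. i < ?n \<and> q \<in> Pf i}"
  define rls where "rls p = rf (hd p) (tl p)" for p
  define \<theta> where "\<theta> p = \<theta>f (hd p) (tl p)" for p
  have "P \<subseteq> fun_poss (Fun f ls)"
    using split unfolding P_def par_rstep_split_def by (auto simp: fun_poss_Cons) (meson subsetD)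
  moreover have "\<forall>p\<in>P. \<forall>q\<in>P. p \<noteq> q \<longrightarrow> parallel p q"
    using split unfolding P_def par_rstep_split_def by (auto simp: parallel_Cons) meson
  moreover have "\<forall>p\<in>P. rls p \<in> S \<and> subst (fst (rls p)) (\<theta> p) = subst (subt_at (Fun f ls) p) \<sigma>'"
  proof
    fix p assume "p \<in> P"
    then obtain i q where p: "p = i # q" "i < ?n" "q \<in> Pf i" unfolding P_def by auto
    then have "q \<in> fun_poss (ls ! i)"
      using split unfolding par_rstep_split_def by auto
    then have "vars (subt_at (ls ! i) q) \<subseteq> vars (ls ! i)"
      by (intro vars_subt_at) (auto simp: fun_poss_def poss_def)
    then show "rls p \<in> S \<and> subst (fst (rls p)) (\<theta> p) = subst (subt_at (Fun f ls) p) \<sigma>'"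
      using split p subst_arg[OF p(2)] unfolding rls_def \<theta>_def par_rstep_split_def by auto
  qed
  moreover have "\<forall>x\<in>vars (Fun f ls). (\<sigma> x, \<sigma>' x) \<in> par_rstep S"
    using split \<sigma>' unfolding par_rstep_split_def by (fastforce simp: in_set_conv_nth)
  moreover have "Fun f us = par_repl (subst (Fun f ls) \<sigma>') P (\<lambda>p. subst (snd (rls p)) (\<theta> p))"
  proof -
    have "Fun f us =
      Fun f (map (\<lambda>i. par_repl (subst (ls ! i) \<sigma>') (Pf i) (\<lambda>q. subst (snd (rf i q)) (\<theta>f i q)))
        [0..<?n])"
      using split subst_arg[OF _ order_refl] len unfolding par_rstep_split_def
      by (auto intro: nth_equalityI)
    also have "\<dots> = par_repl (subst (Fun f ls) \<sigma>') P (\<lambda>p. subst (snd (rls p)) (\<theta> p))"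
      using par_repl_Fun_children[of f "map (\<lambda>t. subst t \<sigma>') ls" Pf]
      unfolding P_def rls_def \<theta>_def by (simp cong: map_cong)
    finally show ?thesis .
  qed
  ultimately show ?thesis
    unfolding par_rstep_split_def by blast
qed

lemma linear_par_rstep_split:
  assumes "linear_term l" and "(subst l \<sigma>, u) \<in> par_rstep S"
  shows "\<exists>P rls \<theta> \<sigma>'. par_rstep_split S l \<sigma> u P rls \<theta> \<sigma>'"
  using assms
proof (induction l arbitrary: u)
  case (Var x)
  then show ?case using par_rstep_split_Var by fastforce
next
  case (Fun f ls)
  from Fun.prems(2) show ?case
  proof (cases rule: par_rstep.cases)
    case (args ss us g)
    then have u: "u = Fun f us" and len: "length us = length ls"
      and ss: "ss = map (\<lambda>t. subst t \<sigma>) ls" by auto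
    have "\<forall>i<length ls. \<exists>P rls \<theta> \<sigma>'. par_rstep_split S (ls ! i) \<sigma> (us ! i) P rls \<theta> \<sigma>'"
      using Fun.prems(1) args(4) ss by (auto intro!: Fun.IH)
    then obtain Pf rf \<theta>f \<sigma>f
      where "\<forall>i<length ls. par_rstep_split S (ls ! i) \<sigma> (us ! i) (Pf i) (rf i) (\<theta>f i) (\<sigma>f i)"
      by metis
    with Fun.prems(1) len show ?thesis
      unfolding u by (intro par_rstep_split_Fun) auto
  next
    case (root l r \<theta>)
    then show ?thesis using par_rstep_split_root[of "(l, r)" S \<theta> f ls \<sigma>] by auto
  qed auto
qed

section \<open>Unification\<close>

lemma unifier_insert: "unifier \<tau> (insert (s, t) E) \<longleftrightarrow> subst s \<tau> = subst t \<tau> \<and> unifier \<tau> E"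
  unfolding unifier_def by auto

lemma unifier_insert_Fun:
  assumes "length ss = length ts"
  shows "unifier \<tau> (insert (Fun f ss, Fun f ts) E) \<longleftrightarrow> unifier \<tau> (set (zip ss ts) \<union> E)"
proof -
  have "map (\<lambda>t. subst t \<tau>) ss = map (\<lambda>t. subst t \<tau>) ts \<longleftrightarrow> unifier \<tau> (set (zip ss ts))"
    using assms unfolding unifier_def by (induction ss ts rule: list_induct2) auto
  then show ?thesis
    unfolding unifier_insert by (auto simp: unifier_def)
qed

lemma is_mgu_cong: "(\<And>\<tau>. unifier \<tau> E \<longleftrightarrow> unifier \<tau> E') \<Longrightarrow> is_mgu \<sigma> E \<longleftrightarrow> is_mgu \<sigma> E'"
  unfolding is_mgu_def by simp

lemma is_mgu_empty: "is_mgu Var {}"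
  unfolding is_mgu_def unifier_def by (simp add: fun_eq_iff[symmetric])

lemma not_unifier_occurs:
  "x \<in> vars u \<Longrightarrow> u \<noteq> Var x \<Longrightarrow> \<not> unifier \<tau> (insert (Var x, u) E)"
  using size_subst_lt_if_occurs[of x u \<tau>] unfolding unifier_insert by auto

lemma unifier_image_subst:
  "unifier \<tau> ((\<lambda>(a, b). (subst a \<theta>, subst b \<theta>)) ` E) \<longleftrightarrow> unifier (\<lambda>y. subst (\<theta> y) \<tau>) E"
  unfolding unifier_def by (auto simp: subst_subst)

lemma unifier_insert_Var_absorb:
  "unifier \<tau> (insert (Var x, u) E) \<Longrightarrow> (\<lambda>y. subst ((Var(x := u)) y) \<tau>) = \<tau>"
  unfolding unifier_insert by auto

lemma is_mgu_insert_Var: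
  assumes x: "x \<notin> vars u"
    and mgu: "is_mgu \<sigma> ((\<lambda>(a, b). (subst a (Var(x := u)), subst b (Var(x := u)))) ` E)"
  shows "is_mgu (\<lambda>y. subst ((Var(x := u)) y) \<sigma>) (insert (Var x, u) E)"
proof -
  let ?\<theta> = "Var(x := u)"
  have "subst u ?\<theta> = u"
    by (rule trans[OF subst_cong subst_Var]) (use x in auto)
  then have "subst u (\<lambda>y. subst (?\<theta> y) \<sigma>) = subst u \<sigma>"
    by (metis subst_subst)
  then have "unifier (\<lambda>y. subst (?\<theta> y) \<sigma>) (insert (Var x, u) E)"
    using mgu unfolding is_mgu_def unifier_insert unifier_image_subst by simp
  moreover have "\<exists>\<delta>. \<forall>y. \<tau> y = subst (subst (?\<theta> y) \<sigma>) \<delta>"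
    if \<tau>: "unifier \<tau> (insert (Var x, u) E)" for \<tau>
  proof -
    note absorb = unifier_insert_Var_absorb[OF \<tau>]
    have "unifier \<tau> ((\<lambda>(a, b). (subst a ?\<theta>, subst b ?\<theta>)) ` E)"
      using \<tau> unfolding unifier_image_subst absorb unifier_insert by simp
    then obtain \<delta> where \<delta>: "\<forall>y. \<tau> y = subst (\<sigma> y) \<delta>"
      using mgu unfolding is_mgu_def by blast
    then have \<tau>_eq: "\<tau> = (\<lambda>z. subst (\<sigma> z) \<delta>)" by auto
    have "\<tau> y = subst (subst (?\<theta> y) \<sigma>) \<delta>" for y
    proof -
      have "\<tau> y = subst (?\<theta> y) \<tau>" using fun_cong[OF absorb, of y] by simp
      also have "\<dots> = subst (subst (?\<theta> y) \<sigma>) \<delta>" by (simp only: \<tau>_eq subst_subst)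
      finally show ?thesis .
    qed
    then show ?thesis by blast
  qed
  ultimately show ?thesis
    unfolding is_mgu_def by blast
qed

definition eqs_vars :: "(('f, 'v) term \<times> ('f, 'v) term) list \<Rightarrow> 'v set" where
  "eqs_vars xs = (\<Union>(s, t)\<in>set xs. vars s \<union> vars t)"

text \<open>The summand \<open>1\<close> is needed because variables have size \<open>0\<close>.\<close>

definition eqs_size :: "(('f, 'v) term \<times> ('f, 'v) term) list \<Rightarrow> nat" where
  "eqs_size xs = (\<Sum>(s, t)\<leftarrow>xs. size s + size t + 1)"

abbreviation unif_less :: "((('f, 'v) term \<times> ('f, 'v) term) list) rel" where
  "unif_less \<equiv> measures [card \<circ> eqs_vars, eqs_size]"

lemma finite_eqs_vars: "finite (eqs_vars xs)"
  unfolding eqs_vars_def by auto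

lemma unif_less_delete: "(rest, (t, t) # rest) \<in> unif_less"
proof -
  have "card (eqs_vars rest) \<le> card (eqs_vars ((t, t) # rest))"
    by (rule card_mono[OF finite_eqs_vars]) (auto simp: eqs_vars_def)
  then show ?thesis by (auto simp: eqs_size_def)
qed

lemma unif_less_decompose:
  assumes "length ss = length ts"
  shows "(zip ss ts @ rest, (Fun f ss, Fun f ts) # rest) \<in> unif_less"
proof -
  have "eqs_vars (zip ss ts) = (\<Union>s\<in>set ss. vars s) \<union> (\<Union>t\<in>set ts. vars t)"
    and "eqs_size (zip ss ts) \<le> size_list size ss + size_list size ts"
    using assms unfolding eqs_vars_def eqs_size_def by (induction ss ts rule: list_induct2) auto
  then show ?thesis
    by (auto simp: eqs_vars_def eqs_size_def)
qed

lemma unif_less_eliminate: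
  assumes "x \<notin> vars u"
  shows "(map (\<lambda>(a, b). (subst a (Var(x := u)), subst b (Var(x := u)))) rest, (Var x, u) # rest)
    \<in> unif_less"
proof -
  have "vars (subst a (Var(x := u))) \<subseteq> vars a - {x} \<union> vars u" for a
    by (auto simp: vars_subst split: if_splits)
  then have "eqs_vars (map (\<lambda>(a, b). (subst a (Var(x := u)), subst b (Var(x := u)))) rest)
    \<subset> eqs_vars ((Var x, u) # rest)"
    using assms unfolding eqs_vars_def by fastforce
  then show ?thesis
    by (simp add: psubset_card_mono[OF finite_eqs_vars])
qed

lemma unifier_imp_mgu_list: "unifier \<tau> (set xs) \<Longrightarrow> \<exists>\<sigma>. is_mgu \<sigma> (set xs)"
proof (induction xs arbitrary: \<tau> rule: wf_induct[OF wf_measures[of "[card \<circ> eqs_vars, eqs_size]"]])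
  case (1 xs)
  have IH: "\<exists>\<sigma>. is_mgu \<sigma> (set ys)" if "(ys, xs) \<in> unif_less" and "unifier \<tau>' (set ys)" for ys \<tau>'
    using 1(1) that by blast
  show ?case
  proof (cases xs)
    case Nil
    then show ?thesis using is_mgu_empty by auto
  next
    case (Cons st rest)
    obtain s t where xs: "xs = (s, t) # rest" using Cons by (cases st) auto
    have unif_rest: "unifier \<tau> (set rest)" and st: "subst s \<tau> = subst t \<tau>"
      using 1(2) unfolding xs by (auto simp: unifier_insert)
    consider (delete) "s = t"
      | (eliminate) x u where "s = Var x \<and> t = u \<or> s = u \<and> t = Var x" "u \<noteq> Var x"
      | (decompose) f ss ts where "s = Fun f ss" "t = Fun f ts" "length ss = length ts"
      using st by (cases s; cases t) (auto dest: map_eq_imp_length_eq)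
    then show ?thesis
    proof cases
      case delete
      then obtain \<sigma> where "is_mgu \<sigma> (set rest)"
        using IH unif_less_delete unif_rest unfolding xs by blast
      then show ?thesis
        using delete is_mgu_cong[of "set rest" "set xs"] by (auto simp: xs unifier_insert)
    next
      case eliminate
      let ?xs = "(Var x, u) # rest"
      have same_measure: "eqs_vars ?xs = eqs_vars xs" "eqs_size ?xs = eqs_size xs"
        using eliminate(1) by (auto simp: xs eqs_vars_def eqs_size_def)
      have swap: "unifier \<tau>' (set xs) \<longleftrightarrow> unifier \<tau>' (set ?xs)" for \<tau>'
        using eliminate(1) unfolding xs by (auto simp: unifier_insert)
      then have unif: "unifier \<tau> (insert (Var x, u) (set rest))"
        using 1(2) by simp
      then have x: "x \<notin> vars u"
        using not_unifier_occurs[OF _ eliminate(2)] by blast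
      define rest' where
        "rest' = map (\<lambda>(a, b). (subst a (Var(x := u)), subst b (Var(x := u)))) rest"
      have "(rest', xs) \<in> unif_less"
        using unif_less_eliminate[OF x, of rest] same_measure unfolding rest'_def by simp
      moreover have "unifier \<tau> (set rest')"
        using unifier_insert_Var_absorb[OF unif] unif_rest
        unfolding rest'_def set_map unifier_image_subst by simp
      ultimately obtain \<sigma> where "is_mgu \<sigma> (set rest')" using IH by blast
      then show ?thesis
        using is_mgu_insert_Var[OF x] is_mgu_cong[OF swap] unfolding rest'_def by auto
    next
      case decompose
      let ?rest = "zip ss ts @ rest"
      have eq: "unifier \<tau>' (set ?rest) \<longleftrightarrow> unifier \<tau>' (set xs)" for \<tau>'
        using unifier_insert_Fun[OF decompose(3)] by (simp add: xs decompose)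
      then obtain \<sigma> where "is_mgu \<sigma> (set ?rest)"
        using IH unif_less_decompose[OF decompose(3)] 1(2) unfolding xs decompose by blast
      then show ?thesis using is_mgu_cong[OF eq] by blast
    qed
  qed
qed

lemma unifier_imp_mgu: "finite E \<Longrightarrow> unifier \<tau> E \<Longrightarrow> \<exists>\<sigma>. is_mgu \<sigma> E"
  using unifier_imp_mgu_list finite_list by metis

section \<open>Renaming apart\<close>

lemma exists_fresh_renaming:
  assumes "infinite (UNIV :: 'v set)" and "finite (A :: 'v set)" and "finite (V :: 'v set)"
  shows "\<exists>\<rho>. bij \<rho> \<and> \<rho> ` A \<inter> V = {}"
proof -
  obtain B where B: "finite B" "card B = card A" "(A \<union> V) \<inter> B = {}"
    using finite_arbitrarily_large_disj[OF assms(1), of "A \<union> V" "card A"] assms(2,3) by auto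
  obtain f where f: "bij_betw f A B"
    using finite_same_card_bij[OF assms(2) B(1) B(2)[symmetric]] by blast
  define \<rho> where "\<rho> x = (if x \<in> A then f x else if x \<in> B then inv_into A f x else x)" for x
  have fB: "f x \<in> B" if "x \<in> A" for x
    using f that by (auto simp: bij_betw_def)
  have "\<rho> (\<rho> x) = x" for x
    using f fB B(3) bij_betw_inv_into[OF f]
    by (auto simp: \<rho>_def bij_betw_def f_inv_into_f inv_into_into disjoint_iff)
  then have "bij \<rho>" by (rule involuntory_imp_bij)
  moreover have "\<rho> ` A \<inter> V = {}"
    using fB B(3) unfolding \<rho>_def by auto
  ultimately show ?thesis by blast
qed

lemma exists_fresh_renamings:
  assumes "infinite (UNIV :: 'v set)" and "finite P"
    and "\<forall>p\<in>P. finite (A p :: 'v set)" and "finite (V :: 'v set)"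
  shows "\<exists>\<rho>. (\<forall>p\<in>P. bij (\<rho> p) \<and> \<rho> p ` A p \<inter> V = {}) \<and>
    (\<forall>p\<in>P. \<forall>q\<in>P. p \<noteq> q \<longrightarrow> \<rho> p ` A p \<inter> \<rho> q ` A q = {})"
  using assms(2,3)
proof (induction rule: finite_induct)
  case (insert p P)
  then obtain \<rho> where \<rho>: "\<forall>q\<in>P. bij (\<rho> q) \<and> \<rho> q ` A q \<inter> V = {}"
    "\<forall>q\<in>P. \<forall>q'\<in>P. q \<noteq> q' \<longrightarrow> \<rho> q ` A q \<inter> \<rho> q' ` A q' = {}" by auto
  obtain \<rho>\<^sub>p where \<rho>\<^sub>p: "bij \<rho>\<^sub>p" "\<rho>\<^sub>p ` A p \<inter> (V \<union> (\<Union>q\<in>P. \<rho> q ` A q)) = {}"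
    using exists_fresh_renaming[OF assms(1), of "A p" "V \<union> (\<Union>q\<in>P. \<rho> q ` A q)"] insert assms(4)
    by auto
  have "\<forall>q\<in>insert p P. bij ((\<rho>(p := \<rho>\<^sub>p)) q) \<and> (\<rho>(p := \<rho>\<^sub>p)) q ` A q \<inter> V = {}"
    using \<rho> \<rho>\<^sub>p by auto
  moreover have "\<forall>q\<in>insert p P. \<forall>q'\<in>insert p P. q \<noteq> q' \<longrightarrow>
      (\<rho>(p := \<rho>\<^sub>p)) q ` A q \<inter> (\<rho>(p := \<rho>\<^sub>p)) q' ` A q' = {}"
    using \<rho>(2) \<rho>\<^sub>p(2) insert.hyps(2) by (simp add: disjoint_iff) blast
  ultimately show ?case by blast
qed simp

lemma rule_vars_rename:
  "rule_vars (subst l (Var \<circ> \<rho>), subst r (Var \<circ> \<rho>)) = \<rho> ` rule_vars (l, r)"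
  unfolding rule_vars_def by (simp add: vars_rename image_Un)

lemma rename_rules_apart:
  assumes "infinite (UNIV :: 'v set)" and "finite P" and "finite (V :: 'v set)"
  shows "\<exists>rls' \<tau>. (\<forall>p\<in>P. is_variant (rls' p) (rls p)) \<and>
    (\<forall>p\<in>P. rule_vars (rls' p) \<inter> V = {}) \<and>
    (\<forall>p\<in>P. \<forall>q\<in>P. p \<noteq> q \<longrightarrow> rule_vars (rls' p) \<inter> rule_vars (rls' q) = {}) \<and>
    (\<forall>p\<in>P. subst (fst (rls' p)) \<tau> = subst (fst (rls p)) (\<theta> p) \<and>
             subst (snd (rls' p)) \<tau> = subst (snd (rls p)) (\<theta> p)) \<and>
    (\<forall>x\<in>V. \<tau> x = \<sigma> x)"
proof -
  obtain \<rho> where \<rho>: "\<forall>p\<in>P. bij (\<rho> p) \<and> \<rho> p ` rule_vars (rls p) \<inter> V = {}"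
    "\<forall>p\<in>P. \<forall>q\<in>P. p \<noteq> q \<longrightarrow> \<rho> p ` rule_vars (rls p) \<inter> \<rho> q ` rule_vars (rls q) = {}"
    using exists_fresh_renamings[OF assms(1,2) _ assms(3), of "\<lambda>p. rule_vars (rls p)"]
    by (auto simp: rule_vars_def)
  define rls' where
    "rls' p = (subst (fst (rls p)) (Var \<circ> \<rho> p), subst (snd (rls p)) (Var \<circ> \<rho> p))" for p
  have vars': "rule_vars (rls' p) = \<rho> p ` rule_vars (rls p)" for p
    unfolding rls'_def using rule_vars_rename[of "fst (rls p)" "\<rho> p" "snd (rls p)"] by simp
  have "\<forall>p\<in>P. \<forall>q\<in>P. p \<noteq> q \<longrightarrow> rule_vars (rls' p) \<inter> rule_vars (rls' q) = {}"
    using \<rho>(2) vars' by auto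
  then obtain g where g: "\<forall>p\<in>P. \<forall>y\<in>rule_vars (rls' p). g y = \<theta> p (inv (\<rho> p) y)"
    using exists_fun_agreeing_on_disjoint[of P "\<lambda>p. rule_vars (rls' p)" "\<lambda>p y. \<theta> p (inv (\<rho> p) y)"]
    by blast
  define \<tau> where "\<tau> y = (if y \<in> V then \<sigma> y else g y)" for y
  have \<tau>_renamed: "\<tau> (\<rho> p x) = \<theta> p x" if "p \<in> P" "x \<in> rule_vars (rls p)" for p x
  proof -
    have "\<rho> p x \<notin> V" "\<rho> p x \<in> rule_vars (rls' p)"
      using \<rho>(1) vars' that by auto
    moreover have "inv (\<rho> p) (\<rho> p x) = x"
      using \<rho>(1) that(1) by (simp add: bij_is_inj)
    ultimately show ?thesis
      using g that(1) unfolding \<tau>_def by simp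
  qed
  have "subst (fst (rls' p)) \<tau> = subst (fst (rls p)) (\<theta> p) \<and>
    subst (snd (rls' p)) \<tau> = subst (snd (rls p)) (\<theta> p)" if "p \<in> P" for p
    unfolding rls'_def using \<tau>_renamed[OF that]
    by (auto simp: subst_subst rule_vars_def intro!: subst_cong)
  moreover have "\<forall>x\<in>V. \<tau> x = \<sigma> x"
    unfolding \<tau>_def by simp
  moreover have "\<forall>p\<in>P. is_variant (rls' p) (rls p)"
    using \<rho>(1) unfolding is_variant_def rls'_def by auto
  ultimately show ?thesis
    by (intro exI[of _ rls'] exI[of _ \<tau>]) (use \<rho> vars' in auto)
qed

section \<open>Parallel critical peaks\<close>

lemma variant_rhs_instance:
  assumes "is_variant rl (l, r)" and "vars r \<subseteq> vars l"
    and "subst (fst rl) \<tau> = subst l \<tau>"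
  shows "subst (snd rl) \<tau> = subst r \<tau>"
proof -
  obtain \<pi> where \<pi>: "fst rl = subst l (Var \<circ> \<pi>)" "snd rl = subst r (Var \<circ> \<pi>)"
    using assms(1) unfolding is_variant_def by auto
  have "subst l (\<lambda>x. \<tau> (\<pi> x)) = subst l \<tau>"
    using assms(3) \<pi>(1) by (simp add: subst_subst)
  then have "\<tau> (\<pi> x) = \<tau> x" if "x \<in> vars l" for x
    using subst_eq_imp_eq_on_vars that by fastforce
  then show ?thesis
    using \<pi>(2) assms(2) by (auto simp: subst_subst intro!: subst_cong)
qed

lemma par_rstep_split_mgu:
  fixes r :: "('f, 'v) term"
  assumes "infinite (UNIV :: 'v set)" and split: "par_rstep_split S l \<sigma> u P rls \<theta> \<sigma>'"
    and vr: "vars r \<subseteq> vars l"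
  obtains rls' \<mu> \<delta> where "\<forall>p\<in>P. is_variant (rls' p) (rls p)"
    "\<forall>p\<in>P. rule_vars (rls' p) \<inter> rule_vars (l, r) = {}"
    "\<forall>p\<in>P. \<forall>q\<in>P. p \<noteq> q \<longrightarrow> rule_vars (rls' p) \<inter> rule_vars (rls' q) = {}"
    "is_mgu \<mu> {(fst (rls' p), subt_at l p) | p. p \<in> P}"
    "u = subst (par_repl (subst l \<mu>) P (\<lambda>p. subst (snd (rls' p)) \<mu>)) \<delta>"
    "subst r \<sigma>' = subst (subst r \<mu>) \<delta>"
proof -
  have P: "\<forall>p\<in>P. subst (fst (rls p)) (\<theta> p) = subst (subt_at l p) \<sigma>'"
    and u: "u = par_repl (subst l \<sigma>') P (\<lambda>p. subst (snd (rls p)) (\<theta> p))"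
    and P_poss: "P \<subseteq> poss l"
    using split unfolding par_rstep_split_def fun_poss_def by auto
  obtain rls' \<tau> where rls': "\<forall>p\<in>P. is_variant (rls' p) (rls p)"
    "\<forall>p\<in>P. rule_vars (rls' p) \<inter> rule_vars (l, r) = {}"
    "\<forall>p\<in>P. \<forall>q\<in>P. p \<noteq> q \<longrightarrow> rule_vars (rls' p) \<inter> rule_vars (rls' q) = {}"
    and \<tau>: "\<forall>p\<in>P. subst (fst (rls' p)) \<tau> = subst (fst (rls p)) (\<theta> p) \<and>
                   subst (snd (rls' p)) \<tau> = subst (snd (rls p)) (\<theta> p)"
      "\<forall>x\<in>rule_vars (l, r). \<tau> x = \<sigma>' x"
    using rename_rules_apart[OF assms(1) finite_subset[OF P_poss finite_poss],
      where V = "rule_vars (l, r)" and rls = rls and \<theta> = \<theta> and \<sigma> = \<sigma>']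
    by (auto simp: rule_vars_def)
  have \<tau>_l: "subst t \<tau> = subst t \<sigma>'" if "vars t \<subseteq> vars l" for t
    by (rule subst_cong) (use that \<tau>(2) in \<open>auto simp: rule_vars_def\<close>)
  define E where "E = {(fst (rls' p), subt_at l p) | p. p \<in> P}"
  have "unifier \<tau> E"
    using P \<tau>(1) \<tau>_l[OF vars_subt_at] P_poss unfolding E_def unifier_def poss_def by auto
  moreover have "finite E"
    unfolding E_def using finite_subset[OF P_poss finite_poss] by simp
  ultimately obtain \<mu> where mgu: "is_mgu \<mu> E"
    using unifier_imp_mgu by blast
  then obtain \<delta> where "\<forall>x. \<tau> x = subst (\<mu> x) \<delta>"
    using \<open>unifier \<tau> E\<close> unfolding is_mgu_def by blast
  then have \<tau>_\<mu>: "\<tau> = (\<lambda>x. subst (\<mu> x) \<delta>)" by auto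
  have "P \<subseteq> poss (subst l \<mu>)"
    using P_poss by (auto simp: poss_def valid_pos_subst)
  then have "subst (par_repl (subst l \<mu>) P (\<lambda>p. subst (snd (rls' p)) \<mu>)) \<delta> =
    par_repl (subst (subst l \<mu>) \<delta>) P (\<lambda>p. subst (subst (snd (rls' p)) \<mu>) \<delta>)"
    by (rule par_repl_subst)
  also have "subst (subst l \<mu>) \<delta> = subst l \<sigma>'"
    using \<tau>_l[of l] by (simp add: subst_subst flip: \<tau>_\<mu>)
  also have "par_repl (subst l \<sigma>') P (\<lambda>p. subst (subst (snd (rls' p)) \<mu>) \<delta>) = u"
    unfolding u using \<tau>(1) by (intro par_repl_cong) (simp add: subst_subst flip: \<tau>_\<mu>)
  finally have "u = subst (par_repl (subst l \<mu>) P (\<lambda>p. subst (snd (rls' p)) \<mu>)) \<delta>" ..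
  moreover have "subst r \<sigma>' = subst (subst r \<mu>) \<delta>"
    using \<tau>_l[OF vr] by (simp add: subst_subst flip: \<tau>_\<mu>)
  ultimately show ?thesis
    using that rls' mgu unfolding E_def by blast
qed

locale pcp_convertible =
  fixes R C :: "('f, 'v) trs"
  assumes infinite_vars: "infinite (UNIV :: 'v set)"
    and wf: "wf_trs R"
    and left_lin: "left_linear R"
    and pcp_conv: "\<forall>(t, u) \<in> pcp R R. (t, u) \<in> conv C"
begin

lemma pcp_instance_conv:
  assumes lr: "(l, r) \<in> R" and S: "S \<subseteq> R"
    and split: "par_rstep_split S l \<sigma> u P rls \<theta> \<sigma>'" and "P \<noteq> {}"
  shows "(u, subst r \<sigma>') \<in> conv C"
proof -
  have vr: "vars r \<subseteq> vars l" using wf lr unfolding wf_trs_def by auto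
  obtain rls' \<mu> \<delta> where rls': "\<forall>p\<in>P. is_variant (rls' p) (rls p)"
    "\<forall>p\<in>P. rule_vars (rls' p) \<inter> rule_vars (l, r) = {}"
    "\<forall>p\<in>P. \<forall>q\<in>P. p \<noteq> q \<longrightarrow> rule_vars (rls' p) \<inter> rule_vars (rls' q) = {}"
    and mgu: "is_mgu \<mu> {(fst (rls' p), subt_at l p) | p. p \<in> P}"
    and u: "u = subst (par_repl (subst l \<mu>) P (\<lambda>p. subst (snd (rls' p)) \<mu>)) \<delta>"
    and r: "subst r \<sigma>' = subst (subst r \<mu>) \<delta>"
    using par_rstep_split_mgu[OF infinite_vars split vr] by blast
  show ?thesis
  proof (cases "P = {[]} \<and> is_variant (rls' []) (l, r)")
    case True
    \<comment> \<open>the overlap of a rule with a variant of itself at the root is trivial\<close>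
    then have "subst (fst (rls' [])) \<mu> = subst l \<mu>"
      using mgu unfolding is_mgu_def unifier_def by auto
    then have "subst (snd (rls' [])) \<mu> = subst r \<mu>"
      using variant_rhs_instance True vr by blast
    then show ?thesis
      using True u r by (simp add: par_repl_root)
  next
    case False
    have "(par_repl (subst l \<mu>) P (\<lambda>p. subst (snd (rls' p)) \<mu>), subst r \<mu>) \<in> pcp R R"
      unfolding pcp_def
    proof (intro CollectI, simp only: prod.case, intro exI conjI)
      show "variant_of (l, r) R" unfolding variant_of_def is_variant_def
        by (rule bexI[OF _ lr], rule exI[of _ id]) auto
      show "\<forall>p\<in>P. variant_of (rls' p) R"
        using rls'(1) split S unfolding variant_of_def par_rstep_split_def by blast
    qed (use False split rls' mgu \<open>P \<noteq> {}\<close> in \<open>auto simp: par_rstep_split_def\<close>)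
    then show ?thesis
      unfolding u r using pcp_conv conv_subst by fast
  qed
qed

lemma root_par_peak:
  assumes "(l, r) \<in> Sa" and "Sa \<subseteq> R" and "Sb \<subseteq> R"
    and "(subst l \<sigma>, u) \<in> par_rstep Sb"
  shows "\<exists>v w. (subst r \<sigma>, v) \<in> par_rstep Sb \<and> (v, w) \<in> conv C \<and> (u, w) \<in> par_rstep Sa"
proof -
  have lr: "(l, r) \<in> R" using assms(1,2) by auto
  have "linear_term l" using left_lin lr unfolding left_linear_def by auto
  then obtain P rls \<theta> \<sigma>' where split: "par_rstep_split Sb l \<sigma> u P rls \<theta> \<sigma>'"
    using linear_par_rstep_split assms(4) by blast
  have "vars r \<subseteq> vars l" using wf lr unfolding wf_trs_def by auto
  then have rhs: "(subst r \<sigma>, subst r \<sigma>') \<in> par_rstep Sb"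
    using split unfolding par_rstep_split_def by (blast intro: par_rstep_subst)
  show ?thesis
  proof (cases "P = {}")
    case True
    then have "u = subst l \<sigma>'" using split unfolding par_rstep_split_def by simp
    then have "(u, subst r \<sigma>') \<in> par_rstep Sa" using par_rstep.root[OF assms(1)] by simp
    with rhs show ?thesis using conv_refl by blast
  next
    case False
    then have "(subst r \<sigma>', u) \<in> conv C"
      using pcp_instance_conv[OF lr assms(3) split] conv_sym by blast
    with rhs show ?thesis using par_rstep_refl by blast
  qed
qed

lemma par_peak:
  assumes "S1 \<subseteq> R" and "S2 \<subseteq> R"
    and "(s, t) \<in> par_rstep S1" and "(s, u) \<in> par_rstep S2"
  shows "\<exists>v w. (t, v) \<in> par_rstep S2 \<and> (v, w) \<in> conv C \<and> (u, w) \<in> par_rstep S1"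
  using assms(3,4)
proof (induction arbitrary: u rule: par_rstep.induct)
  case (var x)
  then show ?case
  proof (cases rule: par_rstep.cases)
    case (root l r \<theta>)
    then have "(l, r) \<in> R" using assms(2) by auto
    then show ?thesis using wf root(1) unfolding wf_trs_def by (cases l) auto
  qed (use par_rstep_refl conv_refl in blast)+
next
  case (args ss ts f)
  note len_ts = args.hyps(1) and IH = args.IH
  from args.prems show ?case
  proof (cases rule: par_rstep.cases)
    case (args us)
    then have "\<forall>i<length ss. \<exists>v w. (ts ! i, v) \<in> par_rstep S2 \<and> (v, w) \<in> conv C \<and>
        (us ! i, w) \<in> par_rstep S1"
      using IH by auto
    then obtain v w where vw: "\<forall>i<length ss.
        (ts ! i, v i) \<in> par_rstep S2 \<and> (v i, w i) \<in> conv C \<and> (us ! i, w i) \<in> par_rstep S1"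
      by metis
    let ?v = "map v [0..<length ss]" and ?w = "map w [0..<length ss]"
    have "(Fun f ts, Fun f ?v) \<in> par_rstep S2" "(Fun f us, Fun f ?w) \<in> par_rstep S1"
      using vw len_ts args by (auto intro!: par_rstep.args)
    moreover have "(Fun f ?v, Fun f ?w) \<in> conv C"
      using vw by (auto intro!: conv_args)
    ultimately show ?thesis using args(1) by blast
  next
    case (root l r \<theta>)
    have "(subst l \<theta>, Fun f ts) \<in> par_rstep S1"
      using par_rstep.args[of ss ts S1 f] len_ts IH root(1) by auto
    then show ?thesis
      using root_par_peak[OF root(3) assms(2,1)] root(2) conv_sym by blast
  qed
next
  case (root l r \<sigma>)
  then show ?case using root_par_peak[OF _ assms(1,2)] by blast
qed

lemma rsteps_par_rstep_commute:
  assumes "C \<subseteq> R" and "(s, t) \<in> (rstep C)\<^sup>*" and "(s, u) \<in> par_rstep R"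
  shows "\<exists>v. (t, v) \<in> par_rstep R \<and> (u, v) \<in> conv C"
  using assms(2,3)
proof (induction arbitrary: u rule: rtrancl_induct)
  case (step t t')
  then obtain v where v: "(t, v) \<in> par_rstep R" "(u, v) \<in> conv C" by blast
  obtain v' w where "(t', v') \<in> par_rstep R" "(v', w) \<in> conv C" "(v, w) \<in> par_rstep C"
    using par_peak[OF assms(1) order_refl rstep_imp_par_rstep[OF step(2)] v(1)] by blast
  moreover have "(v, w) \<in> conv C"
    using \<open>(v, w) \<in> par_rstep C\<close> par_rstep_imp_rsteps rsteps_imp_conv by blast
  ultimately show ?case
    using v(2) by (meson conv_sym conv_trans)
qed (use conv_refl in blast)

lemma diamond_par_rstep_rsteps:
  assumes "C \<subseteq> R" and "CR C"
  shows "(par_rstep R O (rstep C)\<^sup>*)\<inverse> O (par_rstep R O (rstep C)\<^sup>*) \<subseteq>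
    (par_rstep R O (rstep C)\<^sup>*) O (par_rstep R O (rstep C)\<^sup>*)\<inverse>"
proof (rule subrelI)
  fix t u assume "(t, u) \<in> (par_rstep R O (rstep C)\<^sup>*)\<inverse> O (par_rstep R O (rstep C)\<^sup>*)"
  then obtain s t0 u0 where t0: "(s, t0) \<in> par_rstep R" "(t0, t) \<in> (rstep C)\<^sup>*"
    and u0: "(s, u0) \<in> par_rstep R" "(u0, u) \<in> (rstep C)\<^sup>*"
    by blast
  obtain a b where ab: "(t0, a) \<in> par_rstep R" "(a, b) \<in> conv C" "(u0, b) \<in> par_rstep R"
    using par_peak[OF order_refl order_refl t0(1) u0(1)] by blast
  obtain a' where a': "(t, a') \<in> par_rstep R" "(a, a') \<in> conv C"
    using rsteps_par_rstep_commute[OF assms(1) t0(2) ab(1)] by blast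
  obtain b' where b': "(u, b') \<in> par_rstep R" "(b, b') \<in> conv C"
    using rsteps_par_rstep_commute[OF assms(1) u0(2) ab(3)] by blast
  have "(a', b') \<in> conv C"
    using a'(2) ab(2) b'(2) by (meson conv_sym conv_trans)
  then obtain v where "(a', v) \<in> (rstep C)\<^sup>*" "(b', v) \<in> (rstep C)\<^sup>*"
    using CR_conv_imp_join[OF assms(2)] by blast
  then show "(t, u) \<in> (par_rstep R O (rstep C)\<^sup>*) O (par_rstep R O (rstep C)\<^sup>*)\<inverse>"
    using a'(1) b'(1) by blast
qed

lemma CR_if_CR_subsystem:
  assumes "C \<subseteq> R" and "CR C"
  shows "CR R"
proof -
  let ?D = "par_rstep R O (rstep C)\<^sup>*"
  have "?D \<subseteq> (rstep R)\<^sup>*"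
    using par_rstep_imp_rsteps rtrancl_mono[OF rstep_mono[OF assms(1)]] by fastforce
  moreover have "rstep R \<subseteq> ?D"
    using rstep_imp_par_rstep by fastforce
  ultimately have "?D\<^sup>* = (rstep R)\<^sup>*"
    by (metis rtrancl_idemp rtrancl_mono subset_antisym)
  then show ?thesis
    using diamond_imp_confluent[OF diamond_par_rstep_rsteps[OF assms]]
    unfolding CR_def rtrancl_converse by simp
qed

end

theorem theorem8:
  fixes R :: "('f, 'v) trs"
  assumes "infinite (UNIV :: 'v set)"
    and "wf_trs R"
    and "left_linear R"
    and "\<exists>C \<subseteq> R. CR C \<and> (\<forall>(t, u) \<in> pcp R R. (t, u) \<in> conv C)"
  shows "CR R"
proof -
  obtain C where "C \<subseteq> R" "CR C" and "\<forall>(t, u) \<in> pcp R R. (t, u) \<in> conv C"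
    using assms(4) by blast
  then interpret pcp_convertible R C
    using assms(1-3) by unfold_locales
  show ?thesis
    using CR_if_CR_subsystem \<open>C \<subseteq> R\<close> \<open>CR C\<close> by blast
qed

end
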